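(* Let $(u_S,u_R)$ be an environment satisfying scant-indifferences. If a profile $(\sigma,\rho)$ is R-BR and $U_S(\sigma,\rho)$ equals the persuasion payoff, then $\rho$ is pure-on-path, i.e., $\rho(\cdot|m)$ is degenerate for every $m\in M_\sigma$.
   Context: $A=\{a_1,\dots,a_{|A|}\}$ and $\Omega$ are finite nonempty sets, $\mu_0$ a prior on $\Omega$ with $\mu_0(\omega)>0$ for all $\omega$, and $M$ a finite message set with $|M|>\max\{|\Omega|,|A|\}$. An environment is a pair of functions $u_S,u_R:A\times\Omega\to[0,1]$. A messaging strategy is $\sigma:\Omega\to\Delta M$; an action strategy is $\rho:M\to\Delta A$. $U_i(\sigma,\rho)=\sum_{\omega,m,a}\mu_0(\omega)\sigma(m|\omega)\rho(a|m)u_i(a,\omega)$. $(\sigma,\rho)$ is R-BR if $\rho\in\arg\max_{\rho'}U_R(\sigma,\rho')$. The persuasion payoff is the maximum of $U_S$ over R-BR profiles. $M_\sigma=\{m:\sigma(m|\omega)>0\text{ for some }\omega\}$. Scant-indifferences: with $\mathbf u_S(a)=u_S(a,\cdot)\in\mathbb R^{|\Omega|}$, $\mathbf u_R(a)=u_R(a,\cdot)$, for each $i$ the expanded-indifference matrix $T^i$ has $|\Omega|$ columns and rows $\mathbf u_S(a_j)-\mathbf u_S(a_i)$ ($j\ne i$), $\mathbf u_R(a_j)-\mathbf u_R(a_i)$ ($j\ne i$), and the rows of the $|\Omega|\times|\Omega|$ identity; the environment satisfies scant-indifferences if for each $i$ every matrix obtained from $T^i$ by deleting some rows has full rank. *)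

theory Defs
  imports "HOL-Analysis.Analysis" "HOL-Probability.Probability_Mass_Function"
begin

definition U :: "'w::finite pmf \<Rightarrow> ('a::finite \<Rightarrow> 'w \<Rightarrow> real) \<Rightarrow> ('w \<Rightarrow> 'm::finite pmf)
                  \<Rightarrow> ('m \<Rightarrow> 'a pmf) \<Rightarrow> real" where
  "U mu0 u \<sigma> \<rho> = (\<Sum>\<omega>\<in>UNIV. \<Sum>m\<in>UNIV. \<Sum>a\<in>UNIV.
       pmf mu0 \<omega> * pmf (\<sigma> \<omega>) m * pmf (\<rho> m) a * u a \<omega>)"

definition R_BR :: "'w::finite pmf \<Rightarrow> ('a::finite \<Rightarrow> 'w \<Rightarrow> real) \<Rightarrow> ('w \<Rightarrow> 'm::finite pmf)
                  \<Rightarrow> ('m \<Rightarrow> 'a pmf) \<Rightarrow> bool" where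
  "R_BR mu0 uR \<sigma> \<rho> \<longleftrightarrow> (\<forall>\<rho>'. U mu0 uR \<sigma> \<rho>' \<le> U mu0 uR \<sigma> \<rho>)"

definition persuasion_payoff :: "'w::finite pmf \<Rightarrow> ('a::finite \<Rightarrow> 'w \<Rightarrow> real)
     \<Rightarrow> ('a \<Rightarrow> 'w \<Rightarrow> real) \<Rightarrow> 'm::finite itself \<Rightarrow> real" where
  "persuasion_payoff mu0 uS uR (_ :: 'm itself) =
     Sup {U mu0 uS \<sigma> \<rho> | (\<sigma> :: 'w \<Rightarrow> 'm pmf) \<rho>. R_BR mu0 uR \<sigma> \<rho>}"

definition M_sigma :: "('w \<Rightarrow> 'm pmf) \<Rightarrow> 'm set" where
  "M_sigma \<sigma> = {m. \<exists>\<omega>. pmf (\<sigma> \<omega>) m > 0}"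

text \<open>Rows of the expanded-indifference matrix T^i, indexed by
  Inl (j, True): u_S(a_j) - u_S(a_i); Inl (j, False): u_R(a_j) - u_R(a_i) (j ~= i);
  Inr v: the v-th row of the identity.\<close>
definition indiff_row :: "('a \<Rightarrow> 'w::finite \<Rightarrow> real) \<Rightarrow> ('a \<Rightarrow> 'w \<Rightarrow> real) \<Rightarrow> 'a
     \<Rightarrow> ('a \<times> bool) + 'w \<Rightarrow> real^'w" where
  "indiff_row uS uR i k = (case k of
      Inl (j, True) \<Rightarrow> (\<chi> w. uS j w - uS i w)
    | Inl (j, False) \<Rightarrow> (\<chi> w. uR j w - uR i w)
    | Inr v \<Rightarrow> (\<chi> w. if w = v then 1 else 0))"

definition indiff_index :: "'a \<Rightarrow> (('a \<times> bool) + 'w) set" where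
  "indiff_index i = {Inl (j, b) | j b. j \<noteq> i} \<union> range Inr"

text \<open>Scant-indifferences: every row-submatrix of every T^i has full rank,
  i.e. its row rank equals min(number of rows, number of columns).\<close>
definition scant_indifferences :: "('a::finite \<Rightarrow> 'w::finite \<Rightarrow> real) \<Rightarrow> ('a \<Rightarrow> 'w \<Rightarrow> real) \<Rightarrow> bool" where
  "scant_indifferences uS uR \<longleftrightarrow>
     (\<forall>i. \<forall>J \<subseteq> indiff_index i.
        dim (span (indiff_row uS uR i ` J)) = min (card J) CARD('w))"

end

theory Submission
  imports Defs
begin

text \<open>Write \<open>p\<^sub>m\<close> for the unnormalised posterior after message \<open>m\<close>. In an R-BR profile every
  action played after \<open>m\<close> is a receiver best response to \<open>p\<^sub>m\<close>. Suppose \<open>\<rho>(m)\<close> mixes. If some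
  action in its support is worse for the sender than another one, recommending the sender's
  favourite instead is a profitable deviation. Otherwise the sender is indifferent across the
  support; for two support actions \<open>i \<noteq> j\<close>, scant-indifferences yields a direction \<open>e\<close>,
  vanishing where \<open>p\<^sub>m\<close> does, that keeps all receiver indifferences at \<open>p\<^sub>m\<close> but separates
  \<open>i\<close> from \<open>j\<close> for the sender. Splitting \<open>p\<^sub>m\<close> into \<open>p\<^sub>m/2 \<plusminus> t e\<close> with recommendations \<open>j\<close>
  and \<open>i\<close> keeps the receiver obedient for small \<open>t > 0\<close> and raises the sender's payoff.
  Either deviation is realised by direct recommendations, which needs only \<open>|A| \<le> |M|\<close>
  messages, so it beats the persuasion payoff.\<close>

definition expected_utility :: "('a \<Rightarrow> 'w::finite \<Rightarrow> real) \<Rightarrow> ('w \<Rightarrow> real) \<Rightarrow> 'a \<Rightarrow> real" where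
  "expected_utility u p a = (\<Sum>\<omega>\<in>UNIV. p \<omega> * u a \<omega>)"

definition best_response :: "('a \<Rightarrow> 'w::finite \<Rightarrow> real) \<Rightarrow> ('w \<Rightarrow> real) \<Rightarrow> 'a \<Rightarrow> bool" where
  "best_response u p a \<longleftrightarrow> (\<forall>b. expected_utility u p b \<le> expected_utility u p a)"

text \<open>Unnormalised: the joint weight \<open>\<mu>\<^sub>0(\<omega>) \<sigma>(m|\<omega>)\<close>. Best responses do not see the
  normalisation, and the weights of all messages add up to the prior.\<close>

definition posterior :: "'w pmf \<Rightarrow> ('w \<Rightarrow> 'm pmf) \<Rightarrow> 'm \<Rightarrow> 'w \<Rightarrow> real" where
  "posterior mu0 \<sigma> m \<omega> = pmf mu0 \<omega> * pmf (\<sigma> \<omega>) m"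

lemma expected_utility_add [simp]:
  "expected_utility u (\<lambda>\<omega>. p \<omega> + e \<omega>) a = expected_utility u p a + expected_utility u e a"
  unfolding expected_utility_def by (simp add: algebra_simps sum.distrib)

lemma expected_utility_diff [simp]:
  "expected_utility u (\<lambda>\<omega>. p \<omega> - e \<omega>) a = expected_utility u p a - expected_utility u e a"
  unfolding expected_utility_def by (simp add: algebra_simps sum_subtractf)

lemma expected_utility_scale [simp]:
  "expected_utility u (\<lambda>\<omega>. c * p \<omega>) a = c * expected_utility u p a"
  unfolding expected_utility_def by (simp add: sum_distrib_left mult.assoc)

lemma expected_utility_uminus [simp]:
  "expected_utility u (\<lambda>\<omega>. - p \<omega>) a = - expected_utility u p a"
  using expected_utility_scale[of u "-1" p a] by simp

lemma expected_utility_zero [simp]: "expected_utility u (\<lambda>_. 0) a = 0"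
  by (simp add: expected_utility_def)

lemma expected_utility_sum:
  "expected_utility u (\<lambda>\<omega>. \<Sum>k\<in>K. q k \<omega>) a = (\<Sum>k\<in>K. expected_utility u (q k) a)"
  unfolding expected_utility_def sum_distrib_right by (rule sum.swap)

lemma best_response_zero: "best_response u (\<lambda>_. 0) a"
  by (simp add: best_response_def)

lemma best_response_scale:
  assumes "0 < c"
  shows "best_response u (\<lambda>\<omega>. c * p \<omega>) a \<longleftrightarrow> best_response u p a"
  using assms by (simp add: best_response_def)

lemma finite_has_maximizer:
  fixes g :: "'x \<Rightarrow> 'b::linorder"
  assumes "finite S" "S \<noteq> {}"
  obtains c where "c \<in> S" "\<And>a. a \<in> S \<Longrightarrow> g a \<le> g c"
proof -
  have "Max (g ` S) \<in> g ` S" using assms by simp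
  then obtain c where "c \<in> S" "g c = Max (g ` S)" by auto
  with assms show thesis by (intro that) auto
qed

lemma pmf_support_maximizer:
  fixes r :: "'a::finite pmf" and w :: "'a \<Rightarrow> real"
  obtains b where "b \<in> set_pmf r" "\<And>a. a \<in> set_pmf r \<Longrightarrow> w a \<le> w b"
  using finite_has_maximizer[of "set_pmf r" w] by (metis finite set_pmf_not_empty)

lemma best_response_exists: "\<exists>a::'a::finite. best_response u p a"
proof -
  obtain c :: 'a where "\<And>a. expected_utility u p a \<le> expected_utility u p c"
    using finite_has_maximizer[of UNIV "expected_utility u p"] by auto
  then show ?thesis unfolding best_response_def by blast
qed

lemma pmf_weighted_sum_le:
  fixes r :: "'a::finite pmf"
  assumes "\<And>a. a \<in> set_pmf r \<Longrightarrow> w a \<le> c"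
  shows "(\<Sum>a\<in>UNIV. pmf r a * w a) \<le> c"
proof -
  have "(\<Sum>a\<in>UNIV. pmf r a * w a) \<le> (\<Sum>a\<in>UNIV. pmf r a * c)"
    using assms by (intro sum_mono) (metis mult_left_mono mult_not_zero order_refl pmf_nonneg set_pmf_iff)
  also have "\<dots> = c" by (simp add: sum_distrib_right[symmetric] sum_pmf_eq_1)
  finally show ?thesis .
qed

lemma pmf_weighted_sum_less:
  fixes r :: "'a::finite pmf"
  assumes "\<And>a. a \<in> set_pmf r \<Longrightarrow> w a \<le> c" and "b \<in> set_pmf r" "w b < c"
  shows "(\<Sum>a\<in>UNIV. pmf r a * w a) < c"
proof -
  have "(\<Sum>a\<in>UNIV. pmf r a * w a) < (\<Sum>a\<in>UNIV. pmf r a * c)"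
  proof (rule sum_strict_mono_ex1)
    show "\<forall>a\<in>UNIV. pmf r a * w a \<le> pmf r a * c"
      using assms(1) by (metis mult_left_mono mult_not_zero order_refl pmf_nonneg set_pmf_iff)
    show "\<exists>a\<in>UNIV. pmf r a * w a < pmf r a * c"
      using assms(2,3) by (intro bexI[of _ b]) (auto simp: pmf_positive)
  qed simp
  also have "\<dots> = c" by (simp add: sum_distrib_right[symmetric] sum_pmf_eq_1)
  finally show ?thesis .
qed

lemma pmf_weighted_sum_const:
  fixes r :: "'a::finite pmf"
  assumes "\<And>a. a \<in> set_pmf r \<Longrightarrow> w a = c"
  shows "(\<Sum>a\<in>UNIV. pmf r a * w a) = c"
proof -
  have "(\<Sum>a\<in>UNIV. pmf r a * w a) = (\<Sum>a\<in>UNIV. pmf r a * c)"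
    using assms by (intro sum.cong) (auto simp: set_pmf_iff)
  also have "\<dots> = c" by (simp add: sum_distrib_right[symmetric] sum_pmf_eq_1)
  finally show ?thesis .
qed

lemma pmf_weighted_sum_return [simp]:
  "(\<Sum>a\<in>UNIV. pmf (return_pmf b) a * w a) = w (b::'a::finite)"
  by (simp add: indicator_def)

lemma sum_UNIV_fun_upd:
  fixes f :: "'m::finite \<Rightarrow> 'b::ab_group_add"
  shows "(\<Sum>m\<in>UNIV. (f (m0 := x)) m) = (\<Sum>m\<in>UNIV. f m) - f m0 + x"
  by (simp add: sum.remove[of UNIV m0])

lemma sum_UNIV_option:
  fixes f :: "'m::finite option \<Rightarrow> 'b::comm_monoid_add"
  shows "(\<Sum>k\<in>UNIV. f k) = f None + (\<Sum>m\<in>UNIV. f (Some m))"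
  by (simp add: UNIV_option_conv sum.reindex)

lemma sum_UNIV_fibres:
  fixes f :: "'k::finite \<Rightarrow> 'm::finite" and h :: "'k \<Rightarrow> 'b::comm_monoid_add"
  shows "(\<Sum>m\<in>UNIV. \<Sum>k | f k = m. h k) = (\<Sum>k\<in>UNIV. h k)"
  using sum.group[of UNIV UNIV f h] by simp

lemma posterior_nonneg: "0 \<le> posterior mu0 \<sigma> m \<omega>"
  by (simp add: posterior_def)

lemma posterior_nonzero:
  assumes "\<And>\<omega>. pmf mu0 \<omega> > 0" and "m \<in> M_sigma \<sigma>"
  shows "posterior mu0 \<sigma> m \<noteq> (\<lambda>_. 0)"
proof -
  obtain \<omega> where "pmf (\<sigma> \<omega>) m > 0"
    using assms(2) by (auto simp: M_sigma_def)
  then have "posterior mu0 \<sigma> m \<omega> \<noteq> 0"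
    using assms(1)[of \<omega>] by (simp add: posterior_def)
  then show ?thesis by auto
qed

lemma posterior_realisable:
  fixes mu0 :: "'w::finite pmf" and q :: "'k::finite \<Rightarrow> 'w \<Rightarrow> real" and f :: "'k \<Rightarrow> 'm::finite"
  assumes prior_pos: "\<And>\<omega>. pmf mu0 \<omega> > 0"
    and q_nonneg: "\<And>k \<omega>. 0 \<le> q k \<omega>"
    and q_sum: "\<And>\<omega>. (\<Sum>k\<in>UNIV. q k \<omega>) = pmf mu0 \<omega>"
  shows "\<exists>\<sigma>. \<forall>m. posterior mu0 \<sigma> m = (\<lambda>\<omega>. \<Sum>k | f k = m. q k \<omega>)"
proof -
  define weight where "weight \<omega> m = (\<Sum>k | f k = m. q k \<omega>) / pmf mu0 \<omega>" for \<omega> m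
  have weight_nonneg: "0 \<le> weight \<omega> m" for \<omega> m
    unfolding weight_def using q_nonneg prior_pos[of \<omega>] by (simp add: sum_nonneg)
  have "(\<Sum>m\<in>UNIV. weight \<omega> m) = 1" for \<omega>
    using prior_pos[of \<omega>] q_sum[of \<omega>] sum_UNIV_fibres[where f = f and h = "\<lambda>k. q k \<omega>"]
    by (simp add: weight_def sum_divide_distrib[symmetric])
  then have "pmf (embed_pmf (weight \<omega>)) m = weight \<omega> m" for \<omega> m
    using weight_nonneg by (intro pmf_embed_pmf) (simp_all add: nn_integral_count_space_finite)
  then have "posterior mu0 (\<lambda>\<omega>. embed_pmf (weight \<omega>)) m = (\<lambda>\<omega>. \<Sum>k | f k = m. q k \<omega>)" for m
    using prior_pos by (simp add: fun_eq_iff posterior_def weight_def less_imp_neq[symmetric])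
  then show ?thesis by blast
qed

lemma U_eq_sum_posterior:
  fixes mu0 :: "'w::finite pmf" and \<sigma> :: "'w \<Rightarrow> 'm::finite pmf" and \<rho> :: "'m \<Rightarrow> 'a::finite pmf"
  shows "U mu0 u \<sigma> \<rho> = (\<Sum>m\<in>UNIV. \<Sum>a\<in>UNIV. pmf (\<rho> m) a * expected_utility u (posterior mu0 \<sigma> m) a)"
proof -
  have "U mu0 u \<sigma> \<rho> = (\<Sum>m\<in>UNIV. \<Sum>a\<in>UNIV. \<Sum>\<omega>\<in>UNIV. pmf mu0 \<omega> * pmf (\<sigma> \<omega>) m * pmf (\<rho> m) a * u a \<omega>)"
    unfolding U_def by (subst sum.swap) (rule sum.cong[OF refl], rule sum.swap)
  then show ?thesis
    by (simp add: expected_utility_def posterior_def sum_distrib_left mult_ac)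
qed

lemma U_fun_upd:
  fixes mu0 :: "'w::finite pmf" and \<sigma> :: "'w \<Rightarrow> 'm::finite pmf" and \<rho> :: "'m \<Rightarrow> 'a::finite pmf"
  shows "U mu0 u \<sigma> (\<rho>(m := r)) = U mu0 u \<sigma> \<rho>
    - (\<Sum>a\<in>UNIV. pmf (\<rho> m) a * expected_utility u (posterior mu0 \<sigma> m) a)
    + (\<Sum>a\<in>UNIV. pmf r a * expected_utility u (posterior mu0 \<sigma> m) a)"
proof -
  let ?T = "\<lambda>r m. \<Sum>a\<in>UNIV. pmf r a * expected_utility u (posterior mu0 \<sigma> m) a"
  have "U mu0 u \<sigma> (\<rho>(m := r)) = (\<Sum>m'\<in>UNIV. ((\<lambda>m'. ?T (\<rho> m') m')(m := ?T r m)) m')"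
    unfolding U_eq_sum_posterior by (intro sum.cong) auto
  then show ?thesis unfolding sum_UNIV_fun_upd U_eq_sum_posterior by simp
qed

lemma U_le_1:
  fixes mu0 :: "'w::finite pmf" and \<sigma> :: "'w \<Rightarrow> 'm::finite pmf" and \<rho> :: "'m \<Rightarrow> 'a::finite pmf"
  assumes "\<And>a \<omega>. u a \<omega> \<le> 1"
  shows "U mu0 u \<sigma> \<rho> \<le> 1"
proof -
  have "U mu0 u \<sigma> \<rho> \<le> (\<Sum>\<omega>\<in>UNIV. \<Sum>m\<in>UNIV. \<Sum>a\<in>UNIV. pmf mu0 \<omega> * pmf (\<sigma> \<omega>) m * pmf (\<rho> m) a)"
    unfolding U_def using assms by (intro sum_mono) (simp add: mult_left_le)
  also have "\<dots> = 1" by (simp add: sum_distrib_left[symmetric] sum_pmf_eq_1)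
  finally show ?thesis .
qed

lemma R_BR_U_le_persuasion_payoff:
  fixes mu0 :: "'w::finite pmf" and \<sigma> :: "'w \<Rightarrow> 'm::finite pmf" and \<rho> :: "'m \<Rightarrow> 'a::finite pmf"
  assumes "\<And>a \<omega>. uS a \<omega> \<le> 1" and "R_BR mu0 uR \<sigma> \<rho>"
  shows "U mu0 uS \<sigma> \<rho> \<le> persuasion_payoff mu0 uS uR TYPE('m)"
  unfolding persuasion_payoff_def
  using assms U_le_1[OF assms(1)] by (intro cSup_upper) (auto intro!: bdd_aboveI[of _ 1])

lemma R_BR_support_best_response:
  fixes mu0 :: "'w::finite pmf" and \<sigma> :: "'w \<Rightarrow> 'm::finite pmf" and \<rho> :: "'m \<Rightarrow> 'a::finite pmf"
  assumes rbr: "R_BR mu0 uR \<sigma> \<rho>" and a: "a \<in> set_pmf (\<rho> m)"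
  shows "best_response uR (posterior mu0 \<sigma> m) a"
proof (rule ccontr)
  let ?v = "expected_utility uR (posterior mu0 \<sigma> m)"
  obtain c where c: "best_response uR (posterior mu0 \<sigma> m) c" using best_response_exists by blast
  assume "\<not> best_response uR (posterior mu0 \<sigma> m) a"
  then have "?v a < ?v c" using c unfolding best_response_def by (meson not_le order_less_le_trans)
  then have "(\<Sum>a\<in>UNIV. pmf (\<rho> m) a * ?v a) < ?v c"
    using a c by (intro pmf_weighted_sum_less) (auto simp: best_response_def)
  then have "U mu0 uR \<sigma> \<rho> < U mu0 uR \<sigma> (\<rho>(m := return_pmf c))"
    by (simp add: U_fun_upd)
  with rbr show False unfolding R_BR_def by (meson not_le)
qed

lemma R_BR_pure_selection:
  fixes mu0 :: "'w::finite pmf" and \<sigma> :: "'w \<Rightarrow> 'm::finite pmf" and \<rho> :: "'m \<Rightarrow> 'a::finite pmf"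
  assumes rbr: "R_BR mu0 uR \<sigma> \<rho>"
  obtains b where "\<And>m. best_response uR (posterior mu0 \<sigma> m) (b m)"
    and "\<And>m. (\<Sum>a\<in>UNIV. pmf (\<rho> m) a * expected_utility uS (posterior mu0 \<sigma> m) a)
      \<le> expected_utility uS (posterior mu0 \<sigma> m) (b m)"
proof -
  let ?v = "\<lambda>m. expected_utility uS (posterior mu0 \<sigma> m)"
  have "\<exists>b \<in> set_pmf (\<rho> m). \<forall>a \<in> set_pmf (\<rho> m). ?v m a \<le> ?v m b" for m
    using pmf_support_maximizer by metis
  then obtain b where b_supp: "\<And>m. b m \<in> set_pmf (\<rho> m)"
    and b_max: "\<And>m a. a \<in> set_pmf (\<rho> m) \<Longrightarrow> ?v m a \<le> ?v m (b m)"
    by metis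
  show thesis
  proof (rule that)
    show "best_response uR (posterior mu0 \<sigma> m) (b m)" for m
      using R_BR_support_best_response[OF rbr b_supp] .
    show "(\<Sum>a\<in>UNIV. pmf (\<rho> m) a * ?v m a) \<le> ?v m (b m)" for m
      by (rule pmf_weighted_sum_le) (rule b_max)
  qed
qed

lemma obedient_profile_exists:
  fixes mu0 :: "'w::finite pmf" and q :: "'k::finite \<Rightarrow> 'w \<Rightarrow> real" and x :: "'k \<Rightarrow> 'a::finite"
  assumes prior_pos: "\<And>\<omega>. pmf mu0 \<omega> > 0"
    and card: "CARD('a) \<le> CARD('m::finite)"
    and q_nonneg: "\<And>k \<omega>. 0 \<le> q k \<omega>"
    and q_sum: "\<And>\<omega>. (\<Sum>k\<in>UNIV. q k \<omega>) = pmf mu0 \<omega>"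
    and x_best: "\<And>k. best_response uR (q k) (x k)"
  obtains \<sigma> :: "'w \<Rightarrow> 'm::finite pmf" and \<rho> :: "'m \<Rightarrow> 'a pmf"
  where "R_BR mu0 uR \<sigma> \<rho>" "U mu0 uS \<sigma> \<rho> = (\<Sum>k\<in>UNIV. expected_utility uS (q k) (x k))"
proof -
  obtain g :: "'a \<Rightarrow> 'm" where g: "inj g"
    using card card_le_inj[of "UNIV :: 'a set" "UNIV :: 'm set"] by auto
  obtain \<sigma> :: "'w \<Rightarrow> 'm pmf" where posterior_\<sigma>: "\<And>m. posterior mu0 \<sigma> m = (\<lambda>\<omega>. \<Sum>k | g (x k) = m. q k \<omega>)"
    using posterior_realisable[OF prior_pos q_nonneg q_sum, of "\<lambda>k. g (x k)"] by blast
  define \<rho> :: "'m \<Rightarrow> 'a pmf" where "\<rho> m = return_pmf (inv g m)" for m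
  have U_\<sigma>: "U mu0 u \<sigma> r = (\<Sum>k\<in>UNIV. \<Sum>a\<in>UNIV. pmf (r (g (x k))) a * expected_utility u (q k) a)"
    for u r
  proof -
    have "U mu0 u \<sigma> r = (\<Sum>m\<in>UNIV. \<Sum>k | g (x k) = m. \<Sum>a\<in>UNIV. pmf (r m) a * expected_utility u (q k) a)"
      unfolding U_eq_sum_posterior posterior_\<sigma> expected_utility_sum sum_distrib_left
      by (intro sum.cong refl sum.swap)
    also have "\<dots> = (\<Sum>m\<in>UNIV. \<Sum>k | g (x k) = m. \<Sum>a\<in>UNIV. pmf (r (g (x k))) a * expected_utility u (q k) a)"
      by (intro sum.cong) auto
    also have "\<dots> = (\<Sum>k\<in>UNIV. \<Sum>a\<in>UNIV. pmf (r (g (x k))) a * expected_utility u (q k) a)"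
      by (rule sum_UNIV_fibres)
    finally show ?thesis .
  qed
  have U_\<rho>: "U mu0 u \<sigma> \<rho> = (\<Sum>k\<in>UNIV. expected_utility u (q k) (x k))" for u
    unfolding U_\<sigma> \<rho>_def using g by simp
  show thesis
  proof
    show "R_BR mu0 uR \<sigma> \<rho>"
      unfolding R_BR_def U_\<rho>
    proof
      fix r
      show "U mu0 uR \<sigma> r \<le> (\<Sum>k\<in>UNIV. expected_utility uR (q k) (x k))"
        unfolding U_\<sigma> using x_best by (intro sum_mono pmf_weighted_sum_le) (auto simp: best_response_def)
    qed
  qed (rule U_\<rho>)
qed

lemma R_BR_split_message:
  fixes mu0 :: "'w::finite pmf" and \<sigma> :: "'w \<Rightarrow> 'm::finite pmf" and \<rho> :: "'m \<Rightarrow> 'a::finite pmf"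
  assumes prior_pos: "\<And>\<omega>. pmf mu0 \<omega> > 0" and card: "CARD('a) \<le> CARD('m)"
    and rbr: "R_BR mu0 uR \<sigma> \<rho>"
    and q_nonneg: "\<And>\<omega>. 0 \<le> q1 \<omega>" "\<And>\<omega>. 0 \<le> q2 \<omega>"
    and q_sum: "\<And>\<omega>. q1 \<omega> + q2 \<omega> = posterior mu0 \<sigma> m0 \<omega>"
    and x_best: "best_response uR q1 x1" "best_response uR q2 x2"
  obtains \<sigma>' :: "'w \<Rightarrow> 'm pmf" and \<rho>' :: "'m \<Rightarrow> 'a pmf" where "R_BR mu0 uR \<sigma>' \<rho>'"
    "U mu0 uS \<sigma> \<rho> - (\<Sum>a\<in>UNIV. pmf (\<rho> m0) a * expected_utility uS (posterior mu0 \<sigma> m0) a)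
       + expected_utility uS q1 x1 + expected_utility uS q2 x2 \<le> U mu0 uS \<sigma>' \<rho>'"
proof -
  let ?p = "posterior mu0 \<sigma>"
  obtain b where b_best: "\<And>m. best_response uR (?p m) (b m)"
    and b_max: "\<And>m. (\<Sum>a\<in>UNIV. pmf (\<rho> m) a * expected_utility uS (?p m) a) \<le> expected_utility uS (?p m) (b m)"
    using R_BR_pure_selection[OF rbr] by blast
  define q where "q = case_option q2 (\<lambda>m. if m = m0 then q1 else ?p m)"
  define x where "x = case_option x2 (\<lambda>m. if m = m0 then x1 else b m)"
  have sum_remove_m0: "(\<Sum>m\<in>UNIV. f m) = f m0 + (\<Sum>m\<in>UNIV - {m0}. f m)" for f :: "'m \<Rightarrow> real"
    by (simp add: sum.remove)
  obtain \<sigma>' :: "'w \<Rightarrow> 'm pmf" and \<rho>' :: "'m \<Rightarrow> 'a pmf" where rbr': "R_BR mu0 uR \<sigma>' \<rho>'"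
    and U': "U mu0 uS \<sigma>' \<rho>' = (\<Sum>k\<in>UNIV. expected_utility uS (q k) (x k))"
  proof (rule obedient_profile_exists[OF prior_pos card])
    show "0 \<le> q k \<omega>" for k \<omega>
      using q_nonneg by (cases k) (simp_all add: q_def posterior_def)
    show "(\<Sum>k\<in>UNIV. q k \<omega>) = pmf mu0 \<omega>" for \<omega>
    proof -
      have "(\<Sum>k\<in>UNIV. q k \<omega>) = (\<Sum>m\<in>UNIV. ?p m \<omega>)"
        unfolding sum_UNIV_option sum_remove_m0[of "\<lambda>m. q (Some m) \<omega>"] sum_remove_m0[of "\<lambda>m. ?p m \<omega>"]
        using q_sum[of \<omega>] by (simp add: q_def)
      also have "\<dots> = pmf mu0 \<omega>"
        by (simp add: posterior_def sum_distrib_left[symmetric] sum_pmf_eq_1)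
      finally show ?thesis .
    qed
    show "best_response uR (q k) (x k)" for k
      using x_best b_best by (cases k) (simp_all add: q_def x_def)
  qed
  have "U mu0 uS \<sigma> \<rho> - (\<Sum>a\<in>UNIV. pmf (\<rho> m0) a * expected_utility uS (?p m0) a)
      = (\<Sum>m\<in>UNIV - {m0}. \<Sum>a\<in>UNIV. pmf (\<rho> m) a * expected_utility uS (?p m) a)"
    unfolding U_eq_sum_posterior by (simp add: sum.remove[of UNIV m0])
  also have "\<dots> \<le> (\<Sum>m\<in>UNIV - {m0}. expected_utility uS (?p m) (b m))"
    using b_max by (rule sum_mono)
  finally have "U mu0 uS \<sigma> \<rho> - (\<Sum>a\<in>UNIV. pmf (\<rho> m0) a * expected_utility uS (?p m0) a)
       + expected_utility uS q1 x1 + expected_utility uS q2 x2 \<le> U mu0 uS \<sigma>' \<rho>'"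
    unfolding U' sum_UNIV_option sum_remove_m0[of "\<lambda>m. expected_utility uS (q (Some m)) (x (Some m))"]
    by (simp add: q_def x_def)
  with rbr' show thesis by (rule that)
qed

lemma eventually_at_right_nonneg_linear:
  fixes A B :: real
  assumes "0 \<le> A" and "A = 0 \<Longrightarrow> 0 \<le> B"
  shows "\<forall>\<^sub>F t in at_right 0. 0 \<le> A + t * B"
proof (cases "A = 0")
  case True
  show ?thesis
    using eventually_at_right_less[of "0::real"] by (rule eventually_mono) (simp add: True assms(2))
next
  case False
  with assms(1) have "0 < A" by simp
  have "((\<lambda>t. A + t * B) \<longlongrightarrow> A + 0 * B) (at_right 0)"
    by (intro tendsto_intros)
  then have "\<forall>\<^sub>F t in at_right 0. 0 < A + t * B"
    using \<open>0 < A\<close> by (intro order_tendstoD(1)) simp_all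
  then show ?thesis by (rule eventually_mono) simp
qed

lemma eventually_nonneg_perturbed:
  fixes p e :: "'w::finite \<Rightarrow> real"
  assumes "\<And>\<omega>. 0 \<le> p \<omega>" and "\<And>\<omega>. p \<omega> = 0 \<Longrightarrow> e \<omega> = 0"
  shows "\<forall>\<^sub>F t in at_right 0. \<forall>\<omega>. 0 \<le> p \<omega> + t * e \<omega>"
  using assms by (intro eventually_all_finite eventually_at_right_nonneg_linear) auto

lemma eventually_best_response_perturbed:
  fixes u :: "'a::finite \<Rightarrow> 'w::finite \<Rightarrow> real"
  assumes a_best: "best_response u p a"
    and ties: "\<And>b. best_response u p b \<Longrightarrow> expected_utility u e b \<le> expected_utility u e a"
  shows "\<forall>\<^sub>F t in at_right 0. best_response u (\<lambda>\<omega>. p \<omega> + t * e \<omega>) a"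
proof -
  have "\<forall>\<^sub>F t in at_right 0. 0 \<le> (expected_utility u p a - expected_utility u p b)
      + t * (expected_utility u e a - expected_utility u e b)" for b
  proof (rule eventually_at_right_nonneg_linear)
    show "0 \<le> expected_utility u p a - expected_utility u p b"
      using a_best by (simp add: best_response_def)
    assume "expected_utility u p a - expected_utility u p b = 0"
    then have "best_response u p b" using a_best by (simp add: best_response_def)
    then show "0 \<le> expected_utility u e a - expected_utility u e b" using ties by simp
  qed
  then have "\<forall>\<^sub>F t in at_right 0. \<forall>b. expected_utility u (\<lambda>\<omega>. p \<omega> + t * e \<omega>) b
      \<le> expected_utility u (\<lambda>\<omega>. p \<omega> + t * e \<omega>) a"
    by (intro eventually_all_finite) (auto elim!: eventually_mono simp: algebra_simps)
  then show ?thesis unfolding best_response_def .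
qed

lemma eventually_obedient_split:
  fixes u :: "'a::finite \<Rightarrow> 'w::finite \<Rightarrow> real"
  assumes p_nonneg: "\<And>\<omega>. 0 \<le> p \<omega>" and e_supp: "\<And>\<omega>. p \<omega> = 0 \<Longrightarrow> e \<omega> = 0"
    and i_best: "best_response u p i" and j_best: "best_response u p j"
    and e_indiff: "\<And>k. best_response u p k \<Longrightarrow> expected_utility u e k = expected_utility u e i"
  shows "\<forall>\<^sub>F t in at_right 0. (\<forall>\<omega>. 0 \<le> p \<omega> + t * e \<omega>) \<and> (\<forall>\<omega>. 0 \<le> p \<omega> + t * - e \<omega>)
    \<and> best_response u (\<lambda>\<omega>. p \<omega> + t * e \<omega>) j \<and> best_response u (\<lambda>\<omega>. p \<omega> + t * - e \<omega>) i"
proof (intro eventually_conj)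
  show "\<forall>\<^sub>F t in at_right 0. \<forall>\<omega>. 0 \<le> p \<omega> + t * e \<omega>"
    using p_nonneg e_supp by (rule eventually_nonneg_perturbed)
  show "\<forall>\<^sub>F t in at_right 0. \<forall>\<omega>. 0 \<le> p \<omega> + t * - e \<omega>"
    using p_nonneg e_supp by (intro eventually_nonneg_perturbed) simp_all
  show "\<forall>\<^sub>F t in at_right 0. best_response u (\<lambda>\<omega>. p \<omega> + t * e \<omega>) j"
  proof (rule eventually_best_response_perturbed[OF j_best])
    fix b assume "best_response u p b"
    then show "expected_utility u e b \<le> expected_utility u e j"
      using e_indiff e_indiff[OF j_best] by simp
  qed
  show "\<forall>\<^sub>F t in at_right 0. best_response u (\<lambda>\<omega>. p \<omega> + t * - e \<omega>) i"
  proof (rule eventually_best_response_perturbed[OF i_best])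
    fix b assume "best_response u p b"
    then show "expected_utility u (\<lambda>\<omega>. - e \<omega>) b \<le> expected_utility u (\<lambda>\<omega>. - e \<omega>) i"
      using e_indiff by simp
  qed
qed

lemma not_in_span_orthogonal_witness:
  fixes v :: "'a::euclidean_space"
  assumes "v \<notin> span S"
  shows "\<exists>z. (\<forall>s\<in>S. z \<bullet> s = 0) \<and> z \<bullet> v \<noteq> 0"
proof -
  obtain y z where y: "y \<in> span S" and z: "\<And>w. w \<in> span S \<Longrightarrow> orthogonal z w" and v: "v = y + z"
    using orthogonal_subspace_decomp_exists by blast
  have "z \<noteq> 0" using assms y v by auto
  moreover have "z \<bullet> v = z \<bullet> z" using z[OF y] v by (simp add: inner_add_right orthogonal_def)
  moreover have "\<forall>s\<in>S. z \<bullet> s = 0"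
    using z[OF span_base] by (simp add: orthogonal_def)
  ultimately show ?thesis by (metis inner_eq_zero_iff)
qed

lemma inner_indiff_row:
  fixes z :: "real^'w::finite"
  shows "z \<bullet> indiff_row uS uR i (Inl (k, True)) = expected_utility uS (($) z) k - expected_utility uS (($) z) i"
    and "z \<bullet> indiff_row uS uR i (Inl (k, False)) = expected_utility uR (($) z) k - expected_utility uR (($) z) i"
    and "z \<bullet> indiff_row uS uR i (Inr \<omega>) = z $ \<omega>"
  by (simp_all add: indiff_row_def inner_vec_def expected_utility_def sum_subtractf algebra_simps
      if_distrib cong: if_cong)

lemma scant_indifferences_row_not_in_span:
  fixes uS uR :: "'a::finite \<Rightarrow> 'w::finite \<Rightarrow> real"
  assumes scant: "scant_indifferences uS uR"
    and J: "J \<subseteq> indiff_index i" and k: "k \<in> indiff_index i" "k \<notin> J"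
    and not_full: "span (indiff_row uS uR i ` J) \<noteq> UNIV"
  shows "indiff_row uS uR i k \<notin> span (indiff_row uS uR i ` J)"
proof
  let ?row = "indiff_row uS uR i"
  assume k_span: "?row k \<in> span (?row ` J)"
  have dim_rows: "dim (?row ` J') = min (card J') CARD('w)" if "J' \<subseteq> indiff_index i" for J'
    using scant that unfolding scant_indifferences_def by (simp add: dim_span)
  have "dim (?row ` J) = min (card J) CARD('w)"
    using dim_rows[OF J] .
  moreover have "dim (?row ` J) \<noteq> CARD('w)"
    using not_full dim_eq_full[of "?row ` J"] by simp
  moreover have "dim (?row ` insert k J) = min (card J + 1) CARD('w)"
    using dim_rows[of "insert k J"] J k by simp
  moreover have "dim (?row ` insert k J) = dim (?row ` J)"
    using span_redundant[OF k_span] by (metis dim_span image_insert)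
  ultimately show False by linarith
qed

lemma scant_indifferences_direction:
  fixes p :: "'w::finite \<Rightarrow> real" and uS uR :: "'a::finite \<Rightarrow> 'w \<Rightarrow> real"
  assumes scant: "scant_indifferences uS uR" and p_nonzero: "p \<noteq> (\<lambda>_. 0)"
    and "i \<noteq> j" and i_best: "best_response uR p i"
  obtains d where "\<And>\<omega>. p \<omega> = 0 \<Longrightarrow> d \<omega> = 0"
    and "\<And>k. best_response uR p k \<Longrightarrow> expected_utility uR d k = expected_utility uR d i"
    and "expected_utility uS d j \<noteq> expected_utility uS d i"
proof -
  let ?row = "indiff_row uS uR i"
  define J where "J = {Inl (k, False) | k. k \<noteq> i \<and> best_response uR p k} \<union> Inr ` {\<omega>. p \<omega> = 0}"
  have J_index: "J \<subseteq> indiff_index i" by (auto simp: J_def indiff_index_def)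
  have p_orth: "orthogonal (vec_lambda p) s" if "s \<in> ?row ` J" for s
    using that i_best
    by (auto simp: J_def inner_indiff_row best_response_def orthogonal_def vec_lambda_inverse
        intro: order_antisym)
  have "span (?row ` J) \<noteq> UNIV"
  proof
    assume "span (?row ` J) = UNIV"
    then have "orthogonal (vec_lambda p) (vec_lambda p)"
      using orthogonal_to_span p_orth by blast
    then show False using p_nonzero by (simp add: orthogonal_def vec_eq_iff fun_eq_iff)
  qed
  moreover have "Inl (j, True) \<in> indiff_index i" "Inl (j, True) \<notin> J"
    using \<open>i \<noteq> j\<close> by (auto simp: indiff_index_def J_def)
  ultimately have "?row (Inl (j, True)) \<notin> span (?row ` J)"
    using scant_indifferences_row_not_in_span[OF scant J_index] by blast
  then obtain z where z_orth: "\<forall>s \<in> ?row ` J. z \<bullet> s = 0"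
    and z_row: "z \<bullet> ?row (Inl (j, True)) \<noteq> 0"
    using not_in_span_orthogonal_witness by blast
  show thesis
  proof (rule that[of "($) z"])
    fix \<omega> assume "p \<omega> = 0"
    then show "z $ \<omega> = 0" using z_orth[rule_format, of "?row (Inr \<omega>)"] by (simp add: J_def inner_indiff_row)
  next
    fix k assume "best_response uR p k"
    then show "expected_utility uR (($) z) k = expected_utility uR (($) z) i"
      using z_orth[rule_format, of "?row (Inl (k, False))"] by (cases "k = i") (auto simp: J_def inner_indiff_row)
  next
    show "expected_utility uS (($) z) j \<noteq> expected_utility uS (($) z) i"
      using z_row by (simp add: inner_indiff_row)
  qed
qed

lemma scant_indifferences_perturbation:
  fixes p :: "'w::finite \<Rightarrow> real" and uS uR :: "'a::finite \<Rightarrow> 'w \<Rightarrow> real"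
  assumes scant: "scant_indifferences uS uR"
    and p_nonneg: "\<And>\<omega>. 0 \<le> p \<omega>" and p_nonzero: "p \<noteq> (\<lambda>_. 0)"
    and "i \<noteq> j" and i_best: "best_response uR p i" and j_best: "best_response uR p j"
  obtains q1 q2 where "\<And>\<omega>. 0 \<le> q1 \<omega>" "\<And>\<omega>. 0 \<le> q2 \<omega>" "\<And>\<omega>. q1 \<omega> + q2 \<omega> = p \<omega>"
    and "best_response uR q1 j" "best_response uR q2 i"
    and "expected_utility uS p j + expected_utility uS p i
      < 2 * (expected_utility uS q1 j + expected_utility uS q2 i)"
proof -
  obtain d where d_supp: "\<And>\<omega>. p \<omega> = 0 \<Longrightarrow> d \<omega> = 0"
    and d_indiff: "\<And>k. best_response uR p k \<Longrightarrow> expected_utility uR d k = expected_utility uR d i"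
    and d_sender: "expected_utility uS d j \<noteq> expected_utility uS d i"
    using scant_indifferences_direction[OF scant p_nonzero \<open>i \<noteq> j\<close> i_best] by blast
  define \<delta> where "\<delta> = expected_utility uS d j - expected_utility uS d i"
  define e where "e = (\<lambda>\<omega>. \<delta> * d \<omega>)"
  define h where "h = (\<lambda>\<omega>. 1/2 * p \<omega>)"
  have h_best: "best_response uR h k \<longleftrightarrow> best_response uR p k" for k
    unfolding h_def by (rule best_response_scale) simp
  have h_nonneg: "0 \<le> h \<omega>" and h_zero: "h \<omega> = 0 \<Longrightarrow> e \<omega> = 0" for \<omega>
    using p_nonneg[of \<omega>] d_supp[of \<omega>] by (simp_all add: h_def e_def)
  have e_indiff: "expected_utility uR e k = expected_utility uR e i" if "best_response uR h k" for k
    using d_indiff that h_best by (simp add: e_def)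
  have "\<forall>\<^sub>F t in at_right 0. (\<forall>\<omega>. 0 \<le> h \<omega> + t * e \<omega>) \<and> (\<forall>\<omega>. 0 \<le> h \<omega> + t * - e \<omega>)
      \<and> best_response uR (\<lambda>\<omega>. h \<omega> + t * e \<omega>) j \<and> best_response uR (\<lambda>\<omega>. h \<omega> + t * - e \<omega>) i"
    using h_best i_best j_best by (intro eventually_obedient_split[OF h_nonneg h_zero _ _ e_indiff]) simp_all
  from eventually_happens'[OF trivial_limit_at_right_real eventually_conj[OF eventually_at_right_less this]]
  obtain t where t: "0 < t" and nonneg: "\<And>\<omega>. 0 \<le> h \<omega> + t * e \<omega>" "\<And>\<omega>. 0 \<le> h \<omega> + t * - e \<omega>"
    and best: "best_response uR (\<lambda>\<omega>. h \<omega> + t * e \<omega>) j" "best_response uR (\<lambda>\<omega>. h \<omega> + t * - e \<omega>) i"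
    by blast
  have h_eu: "expected_utility u h a = 1/2 * expected_utility u p a" for u a
    unfolding h_def by (rule expected_utility_scale)
  have e_eu: "expected_utility u e a = \<delta> * expected_utility u d a" for u a
    by (simp add: e_def)
  have "\<delta> \<noteq> 0"
    using d_sender by (simp add: \<delta>_def)
  then have "0 < t * (\<delta> * \<delta>)"
    using t by (metis mult_pos_pos not_real_square_gt_zero)
  moreover have "2 * (expected_utility uS (\<lambda>\<omega>. h \<omega> + t * e \<omega>) j
      + expected_utility uS (\<lambda>\<omega>. h \<omega> + t * - e \<omega>) i)
    = expected_utility uS p j + expected_utility uS p i + 2 * (t * (\<delta> * \<delta>))"
    by (simp add: h_eu e_eu \<delta>_def algebra_simps)
  moreover have "h \<omega> + t * e \<omega> + (h \<omega> + t * - e \<omega>) = p \<omega>" for \<omega>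
    by (simp add: h_def)
  ultimately show thesis
    using that[OF nonneg _ best] by simp
qed

lemma nondegenerate_recommendation_improvable:
  fixes p :: "'w::finite \<Rightarrow> real" and r :: "'a::finite pmf"
  assumes scant: "scant_indifferences uS uR"
    and p_nonneg: "\<And>\<omega>. 0 \<le> p \<omega>" and p_nonzero: "p \<noteq> (\<lambda>_. 0)"
    and r_best: "\<And>a. a \<in> set_pmf r \<Longrightarrow> best_response uR p a"
    and r_nondegenerate: "\<And>a. r \<noteq> return_pmf a"
  obtains q1 q2 x1 x2 where "\<And>\<omega>. 0 \<le> q1 \<omega>" "\<And>\<omega>. 0 \<le> q2 \<omega>" "\<And>\<omega>. q1 \<omega> + q2 \<omega> = p \<omega>"
    and "best_response uR q1 x1" "best_response uR q2 x2"
    and "(\<Sum>a\<in>UNIV. pmf r a * expected_utility uS p a) < expected_utility uS q1 x1 + expected_utility uS q2 x2"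
proof -
  let ?v = "expected_utility uS p"
  obtain b where b: "b \<in> set_pmf r" and b_max: "\<And>a. a \<in> set_pmf r \<Longrightarrow> ?v a \<le> ?v b"
    using pmf_support_maximizer[of r ?v] by blast
  show thesis
  proof (cases "\<exists>a \<in> set_pmf r. ?v a < ?v b")
    case True
    then obtain a where "a \<in> set_pmf r" "?v a < ?v b" by blast
    then have "(\<Sum>a\<in>UNIV. pmf r a * ?v a) < ?v b"
      using pmf_weighted_sum_less[of r ?v "?v b" a] b_max by blast
    then show thesis
      by (intro that[of p "\<lambda>_. 0" b b]) (simp_all add: p_nonneg r_best[OF b] best_response_zero)
  next
    case False
    then have ties: "?v a = ?v b" if "a \<in> set_pmf r" for a
      using b_max[OF that] that by (meson antisym not_le)
    then have average: "(\<Sum>a\<in>UNIV. pmf r a * ?v a) = ?v b"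
      by (rule pmf_weighted_sum_const)
    have "\<not> set_pmf r \<subseteq> {b}"
      using r_nondegenerate[of b] by (simp add: set_pmf_subset_singleton)
    then obtain j where j: "j \<in> set_pmf r" "j \<noteq> b" by blast
    show thesis
    proof (rule scant_indifferences_perturbation[OF scant p_nonneg p_nonzero j(2)[symmetric] r_best[OF b] r_best[OF j(1)]])
      fix q1 q2
      assume split: "\<And>\<omega>. 0 \<le> q1 \<omega>" "\<And>\<omega>. 0 \<le> q2 \<omega>" "\<And>\<omega>. q1 \<omega> + q2 \<omega> = p \<omega>"
        "best_response uR q1 j" "best_response uR q2 b"
        and doubled_gain: "?v j + ?v b < 2 * (expected_utility uS q1 j + expected_utility uS q2 b)"
      have "(\<Sum>a\<in>UNIV. pmf r a * ?v a) < expected_utility uS q1 j + expected_utility uS q2 b"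
        using doubled_gain by (simp add: average ties[OF j(1)])
      with split show thesis by (rule that)
    qed
  qed
qed

theorem lemma4:
  fixes mu0 :: "'w::finite pmf"
    and uS uR :: "'a::finite \<Rightarrow> 'w \<Rightarrow> real"
    and \<sigma> :: "'w \<Rightarrow> 'm::finite pmf"
    and \<rho> :: "'m \<Rightarrow> 'a pmf"
  assumes prior_pos: "\<forall>\<omega>. pmf mu0 \<omega> > 0"
    and card_M: "CARD('m) > CARD('w)" "CARD('m) > CARD('a)"
    and uS_range: "\<forall>a \<omega>. 0 \<le> uS a \<omega> \<and> uS a \<omega> \<le> 1"
    and uR_range: "\<forall>a \<omega>. 0 \<le> uR a \<omega> \<and> uR a \<omega> \<le> 1"
    and scant: "scant_indifferences uS uR"
    and rbr: "R_BR mu0 uR \<sigma> \<rho>"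
    and opt: "U mu0 uS \<sigma> \<rho> = persuasion_payoff mu0 uS uR TYPE('m)"
  shows "\<forall>m \<in> M_sigma \<sigma>. \<exists>a. \<rho> m = return_pmf a"
proof (rule ballI, rule ccontr)
  fix m assume "m \<in> M_sigma \<sigma>" and "\<not> (\<exists>a. \<rho> m = return_pmf a)"
  then have nondegenerate: "\<And>a. \<rho> m \<noteq> return_pmf a" by blast
  have prior_pos': "\<And>\<omega>. pmf mu0 \<omega> > 0" and card: "CARD('a) \<le> CARD('m)"
    using prior_pos card_M(2) by simp_all
  let ?p = "posterior mu0 \<sigma> m"
  obtain q1 q2 x1 x2 where split: "\<And>\<omega>. 0 \<le> q1 \<omega>" "\<And>\<omega>. 0 \<le> q2 \<omega>" "\<And>\<omega>. q1 \<omega> + q2 \<omega> = ?p \<omega>"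
      "best_response uR q1 x1" "best_response uR q2 x2"
    and gain: "(\<Sum>a\<in>UNIV. pmf (\<rho> m) a * expected_utility uS ?p a)
      < expected_utility uS q1 x1 + expected_utility uS q2 x2"
    using nondegenerate_recommendation_improvable[OF scant posterior_nonneg
        posterior_nonzero[OF prior_pos' \<open>m \<in> M_sigma \<sigma>\<close>] R_BR_support_best_response[OF rbr] nondegenerate]
    by blast
  obtain \<sigma>' :: "'w \<Rightarrow> 'm pmf" and \<rho>' where rbr': "R_BR mu0 uR \<sigma>' \<rho>'"
    and "U mu0 uS \<sigma> \<rho> - (\<Sum>a\<in>UNIV. pmf (\<rho> m) a * expected_utility uS ?p a)
      + expected_utility uS q1 x1 + expected_utility uS q2 x2 \<le> U mu0 uS \<sigma>' \<rho>'"
    using R_BR_split_message[OF prior_pos' card rbr split] by blast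
  moreover have "U mu0 uS \<sigma>' \<rho>' \<le> U mu0 uS \<sigma> \<rho>"
    using R_BR_U_le_persuasion_payoff[OF _ rbr'] uS_range opt by simp
  ultimately show False using gain by simp
qed

end
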